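(* Assume $\bm\lambda\neq0$ and $\bm\mu\neq0$. For $r\in\mathbb Z$ and a polynomial $f\in\mathbb C[x]$ define the operator $T_{r,f}=\sum_{j\in\mathbb Z} f(-j)\,:a(r-j)a^*(j):$ on $M_1(\bm\lambda,\bm\mu)$ (well defined, since on each vector only finitely many summands act nontrivially). Then $M_1(\bm\lambda,\bm\mu)$ is generated by $w$ under the operators $T_{r,f}$, i.e. the smallest subspace containing $w$ and invariant under all $T_{r,f}$ is $M_1(\bm\lambda,\bm\mu)$. Equivalently, $M_1(\bm\lambda,\bm\mu)$ is a cyclic module, generated by $w$, for the vertex algebra $\mathcal W_{1+\infty,c=-1}\cong M^0$.
   Context: Let $\widehat{\mathcal A}$ be the Weyl algebra: the unital associative complex algebra generated by $a(r),a^*(r)$ ($r\in\mathbb Z$) with relations $[a(r),a(s)]=[a^*(r),a^*(s)]=0$ and $[a(r),a^*(s)]=\delta_{r+s,0}$. Fix integers $n\ge 0$, $m\ge 1$, $\bm\lambda=(\lambda_0,\dots,\lambda_n)\in\mathbb C^{n+1}$, $\bm\mu=(\mu_1,\dots,\mu_m)\in\mathbb C^m$, and set $\lambda_i=0$ for $i>n$, $\mu_j=0$ for $j>m$. The Whittaker module $M_1(\bm\lambda,\bm\mu)=\widehat{\mathcal A}/\mathcal I$, where $\mathcal I$ is the left ideal generated by $a(i)-\lambda_i$ ($i\ge 0$) and $a^*(j)-\mu_j$ ($j\ge 1$); $w=w_{\bm\lambda,\bm\mu}$ denotes the image of $1$. Normal ordering: $:a(i)a^*(j):$ equals $a^*(j)a(i)$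 if $i\ge 0$ and $j\le 0$, and equals $a(i)a^*(j)$ otherwise. The operators $T_{r,f}$ are the images of $t^rf(D)$ ($D=t\,\partial_t$) under the representation of the central extension $\widehat{\mathcal D}$ of the Lie algebra of regular differential operators on $\mathbb C^*$; the Weyl vertex algebra $M$ has fields $a(z)=\sum a(r)z^{-r-1}$, $a^*(z)=\sum a^*(r)z^{-r}$, its subalgebra $M^0=\ker J^0(0)$ (with $J^0(z)=:a(z)a^*(z):$) is isomorphic to the simple vertex algebra $\mathcal W_{1+\infty}$ at central charge $-1$, and it is generated by the fields $:(\partial_z^k a^*(z))a(z):$, $k\ge0$, whose modes are the operators $T_{r,f}$ with $f(x)=x(x-1)\cdots(x-k+1)$. *)

theory Defs
  imports "HOL-Computational_Algebra.Polynomial"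
begin

text \<open>Generators of the Weyl algebra: A r stands for a(r), Astar r for a*(r).\<close>
datatype gen = A int | Astar int

text \<open>The free associative unital complex algebra on the generators:
  finitely supported functions from words (lists of generators) to complex numbers.\<close>
type_synonym fa = "gen list \<Rightarrow> complex"

definition finsupp :: "fa \<Rightarrow> bool" where
  "finsupp p \<longleftrightarrow> finite {w. p w \<noteq> 0}"

definition word :: "gen list \<Rightarrow> fa" where
  "word u = (\<lambda>w. if w = u then 1 else 0)"

definition fa_zero :: fa where
  "fa_zero = (\<lambda>w. 0)"

definition fa_add :: "fa \<Rightarrow> fa \<Rightarrow> fa" where
  "fa_add p q = (\<lambda>w. p w + q w)"

definition fa_diff :: "fa \<Rightarrow> fa \<Rightarrow> fa" where
  "fa_diff p q = (\<lambda>w. p w - q w)"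

definition fa_scale :: "complex \<Rightarrow> fa \<Rightarrow> fa" where
  "fa_scale c p = (\<lambda>w. c * p w)"

definition fa_mult :: "fa \<Rightarrow> fa \<Rightarrow> fa" where
  "fa_mult p q = (\<lambda>w. \<Sum>i\<le>length w. p (take i w) * q (drop i w))"

definition weyl_relators :: "fa set" where
  "weyl_relators =
     {fa_diff (word [A r, A s]) (word [A s, A r]) | r s. True}
   \<union> {fa_diff (word [Astar r, Astar s]) (word [Astar s, Astar r]) | r s. True}
   \<union> {fa_diff (fa_diff (word [A r, Astar s]) (word [Astar s, A r]))
              (if r + s = 0 then word [] else fa_zero) | r s. True}"

definition whit_gens :: "(nat \<Rightarrow> complex) \<Rightarrow> (nat \<Rightarrow> complex) \<Rightarrow> fa set" where
  "whit_gens lam mu =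
     {fa_diff (word [A (int i)]) (fa_scale (lam i) (word [])) | i. True}
   \<union> {fa_diff (word [Astar (int j)]) (fa_scale (mu j) (word [])) | j. j \<ge> 1}"

text \<open>The kernel of the projection from the free algebra onto
  M_1(lambda,mu) = Weyl / I: it is the two-sided ideal generated by the Weyl
  relators plus the left ideal generated by the Whittaker generators.\<close>
inductive_set whitK :: "(nat \<Rightarrow> complex) \<Rightarrow> (nat \<Rightarrow> complex) \<Rightarrow> fa set"
  for lam mu where
  zero: "fa_zero \<in> whitK lam mu"
| add: "p \<in> whitK lam mu \<Longrightarrow> q \<in> whitK lam mu \<Longrightarrow> fa_add p q \<in> whitK lam mu"
| scale: "p \<in> whitK lam mu \<Longrightarrow> fa_scale c p \<in> whitK lam mu"
| rel: "finsupp x \<Longrightarrow> finsupp y \<Longrightarrow> \<rho> \<in> weyl_relators \<Longrightarrow>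
          fa_mult (fa_mult x \<rho>) y \<in> whitK lam mu"
| whit: "finsupp x \<Longrightarrow> g \<in> whit_gens lam mu \<Longrightarrow> fa_mult x g \<in> whitK lam mu"

definition nord :: "int \<Rightarrow> int \<Rightarrow> gen list" where
  "nord i j = (if i \<ge> 0 \<and> j \<le> 0 then [Astar j, A i] else [A i, Astar j])"

definition Tterm :: "int \<Rightarrow> complex poly \<Rightarrow> fa \<Rightarrow> int \<Rightarrow> fa" where
  "Tterm r f v j = fa_scale (poly f (- of_int j)) (fa_mult (word (nord (r - j) j)) v)"

text \<open>T_{r,f} applied to (a representative of) a vector v of M_1(lambda,mu):
  the sum of those summands which are nonzero in M_1(lambda,mu)
  (finitely many, by the paper; the sum is taken modulo whitK).\<close>
definition Top :: "(nat \<Rightarrow> complex) \<Rightarrow> (nat \<Rightarrow> complex) \<Rightarrow> int \<Rightarrow> complex poly \<Rightarrow> fa \<Rightarrow> fa" where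
  "Top lam mu r f v =
     (\<lambda>w. \<Sum>j\<in>{j. Tterm r f v j \<notin> whitK lam mu}. Tterm r f v j w)"

end

theory Submission
  imports Defs
begin

text \<open>M_1 is spanned by the classes of words, so it suffices to show by induction on the length
  that every word lies in S. Applied to a word t, the operator T_{r,f} has only finitely many
  summands outside the kernel: a far-out mode commutes through t without contracting and then
  annihilates w. Choosing f to vanish at all but one of these summands isolates the single word
  :a(r-q)a*(q): t. Hence S contains a(p) a*(j0) t and a*(q) a(i0) t for all p and q, where
  mu_j0 and lambda_i0 are nonzero. Commuting a*(j0) resp. a(i0) through t onto w, where it acts
  by that nonzero scalar, reduces a(p) t and a*(q) t to shorter words; a*(q) with q \<ge> 1
  acts on w by the scalar mu_q directly.\<close>

definition fa_subspace :: "fa set \<Rightarrow> bool" where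
  "fa_subspace T \<longleftrightarrow> (\<forall>p\<in>T. \<forall>q\<in>T. fa_add p q \<in> T) \<and> (\<forall>c. \<forall>p\<in>T. fa_scale c p \<in> T)"

lemma fa_subspace_lincomb:
  assumes "fa_subspace T" "p \<in> T" "q \<in> T" "\<And>w. r w = \<alpha> * p w + \<beta> * q w"
  shows "r \<in> T"
proof -
  have "fa_add (fa_scale \<alpha> p) (fa_scale \<beta> q) \<in> T"
    using assms(1-3) unfolding fa_subspace_def by blast
  moreover have "fa_add (fa_scale \<alpha> p) (fa_scale \<beta> q) = r"
    using assms(4) by (auto simp: fa_add_def fa_scale_def)
  ultimately show ?thesis by simp
qed

lemma fa_subspace_whitK: "fa_subspace (whitK lam mu)"
  unfolding fa_subspace_def by (auto intro: whitK.add whitK.scale)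

lemma whitK_scale_iff:
  assumes "c \<noteq> 0"
  shows "fa_scale c p \<in> whitK lam mu \<longleftrightarrow> p \<in> whitK lam mu"
proof
  assume "fa_scale c p \<in> whitK lam mu"
  from whitK.scale[OF this, of "1 / c"] show "p \<in> whitK lam mu"
    using assms by (simp add: fa_scale_def)
qed (rule whitK.scale)

lemma finsupp_word: "finsupp (word u)"
proof -
  have "{w. word u w \<noteq> 0} = {u}" by (auto simp: word_def)
  thus ?thesis by (simp add: finsupp_def)
qed

lemma finsupp_in_subspace_of_words:
  assumes "fa_subspace T" "\<And>u. word u \<in> T" "finsupp v"
  shows "v \<in> T"
proof -
  have "(\<lambda>w. if w \<in> F then v w else 0) \<in> T" if "finite F" for F
    using that
  proof (induction F rule: finite_induct)
    case empty
    show ?case by (rule fa_subspace_lincomb[OF assms(1) assms(2) assms(2), where \<alpha>=0 and \<beta>=0]) simp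
  next
    case (insert u F)
    show ?case
      by (rule fa_subspace_lincomb[OF assms(1) assms(2)[of u] insert.IH, where \<alpha>="v u" and \<beta>=1])
         (use insert.hyps in \<open>auto simp: word_def\<close>)
  qed
  moreover have "finite {w. v w \<noteq> 0}" using assms(3) unfolding finsupp_def .
  ultimately have "(\<lambda>w. if w \<in> {w. v w \<noteq> 0} then v w else 0) \<in> T" by blast
  moreover have "(\<lambda>w. if w \<in> {w. v w \<noteq> 0} then v w else 0) = v" by auto
  ultimately show ?thesis by simp
qed

lemma fa_mult_word: "fa_mult (word a) (word b) = word (a @ b)"
proof
  fix w
  have "word a (take i w) * word b (drop i w) = (if i = length a \<and> w = a @ b then 1 else 0)"
    if "i \<le> length w" for i
    using that by (auto simp: word_def)
  hence "fa_mult (word a) (word b) w = (\<Sum>i\<le>length w. if i = length a \<and> w = a @ b then 1 else 0)"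
    unfolding fa_mult_def by (intro sum.cong) auto
  also have "\<dots> = word (a @ b) w"
    by (auto simp: word_def)
  finally show "fa_mult (word a) (word b) w = word (a @ b) w" .
qed

lemma fa_mult_diff_left: "fa_mult (fa_diff p q) r = fa_diff (fa_mult p r) (fa_mult q r)"
  by (auto simp: fa_mult_def fa_diff_def left_diff_distrib sum_subtractf)

lemma fa_mult_diff_right: "fa_mult r (fa_diff p q) = fa_diff (fa_mult r p) (fa_mult r q)"
  by (auto simp: fa_mult_def fa_diff_def right_diff_distrib sum_subtractf)

lemma fa_mult_scale_right: "fa_mult p (fa_scale c q) = fa_scale c (fa_mult p q)"
  by (auto simp: fa_mult_def fa_scale_def sum_distrib_left algebra_simps)

lemma fa_mult_zero_left: "fa_mult fa_zero p = fa_zero"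
  by (auto simp: fa_mult_def fa_zero_def)

lemma fa_mult_zero_right: "fa_mult p fa_zero = fa_zero"
  by (auto simp: fa_mult_def fa_zero_def)

lemmas fa_mult_simps = fa_mult_word fa_mult_diff_left fa_mult_diff_right fa_mult_scale_right
  fa_mult_zero_left fa_mult_zero_right

definition weyl_bracket :: "gen \<Rightarrow> gen \<Rightarrow> complex" where
  "weyl_bracket c d =
     (case (c, d) of
        (A i, Astar s) \<Rightarrow> if i + s = 0 then 1 else 0
      | (Astar s, A i) \<Rightarrow> if i + s = 0 then -1 else 0
      | _ \<Rightarrow> 0)"

lemma word_commutator_in_whitK:
  "fa_diff (fa_diff (word (x @ c # d # t)) (word (x @ d # c # t)))
     (fa_scale (weyl_bracket c d) (word (x @ t))) \<in> whitK lam mu"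
    (is "?lhs \<in> _")
proof -
  have sandwich: "fa_mult (fa_mult (word x) \<rho>) (word t) \<in> whitK lam mu" if "\<rho> \<in> weyl_relators" for \<rho>
    using that by (intro whitK.rel finsupp_word)
  have trivial: "fa_scale 1 p = p" "fa_scale 0 p = fa_zero" "fa_diff p fa_zero = p" for p
    by (auto simp: fa_scale_def fa_zero_def fa_diff_def)
  show ?thesis
  proof (cases c; cases d)
    fix i s assume cd: "c = A i" "d = Astar s"
    let ?\<rho> = "fa_diff (fa_diff (word [A i, Astar s]) (word [Astar s, A i]))
               (if i + s = 0 then word [] else fa_zero)"
    have "?\<rho> \<in> weyl_relators" unfolding weyl_relators_def by blast
    moreover have "fa_mult (fa_mult (word x) ?\<rho>) (word t) = ?lhs"
      using cd by (simp add: fa_mult_simps weyl_bracket_def trivial)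
    ultimately show ?thesis using sandwich by metis
  next
    fix s i assume cd: "c = Astar s" "d = A i"
    let ?\<rho> = "fa_diff (fa_diff (word [A i, Astar s]) (word [Astar s, A i]))
               (if i + s = 0 then word [] else fa_zero)"
    have "?\<rho> \<in> weyl_relators" unfolding weyl_relators_def by blast
    hence "fa_scale (-1) (fa_mult (fa_mult (word x) ?\<rho>) (word t)) \<in> whitK lam mu"
      using sandwich by (blast intro: whitK.scale)
    moreover have "fa_scale (-1) (fa_mult (fa_mult (word x) ?\<rho>) (word t)) = ?lhs"
      using cd by (cases "i + s = 0") (simp_all add: fa_mult_simps weyl_bracket_def,
          simp_all add: fun_eq_iff fa_diff_def fa_scale_def fa_zero_def)
    ultimately show ?thesis by metis
  next
    fix i s assume cd: "c = A i" "d = A s"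
    let ?\<rho> = "fa_diff (word [A i, A s]) (word [A s, A i])"
    have "?\<rho> \<in> weyl_relators" unfolding weyl_relators_def by blast
    moreover have "fa_mult (fa_mult (word x) ?\<rho>) (word t) = ?lhs"
      using cd by (simp add: fa_mult_simps weyl_bracket_def trivial)
    ultimately show ?thesis using sandwich by metis
  next
    fix i s assume cd: "c = Astar i" "d = Astar s"
    let ?\<rho> = "fa_diff (word [Astar i, Astar s]) (word [Astar s, Astar i])"
    have "?\<rho> \<in> weyl_relators" unfolding weyl_relators_def by blast
    moreover have "fa_mult (fa_mult (word x) ?\<rho>) (word t) = ?lhs"
      using cd by (simp add: fa_mult_simps weyl_bracket_def trivial)
    ultimately show ?thesis using sandwich by metis
  qed
qed

lemma word_swap_in_subspace:
  assumes "fa_subspace T" "whitK lam mu \<subseteq> T"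
    and "weyl_bracket c d \<noteq> 0 \<Longrightarrow> word (x @ t) \<in> T"
  shows "fa_diff (word (x @ c # d # t)) (word (x @ d # c # t)) \<in> T"
proof -
  have comm: "fa_diff (fa_diff (word (x @ c # d # t)) (word (x @ d # c # t)))
      (fa_scale (weyl_bracket c d) (word (x @ t))) \<in> T"
    using word_commutator_in_whitK assms(2) by blast
  show ?thesis
  proof (cases "weyl_bracket c d = 0")
    case True
    show ?thesis
      by (rule fa_subspace_lincomb[OF assms(1) comm comm, where \<alpha>=1 and \<beta>=0])
         (simp add: True fa_diff_def fa_scale_def)
  next
    case False
    show ?thesis
      by (rule fa_subspace_lincomb[OF assms(1) comm assms(3)[OF False],
            where \<alpha>=1 and \<beta>="weyl_bracket c d"])
         (simp add: fa_diff_def fa_scale_def)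
  qed
qed

definition whit_eigen :: "(nat \<Rightarrow> complex) \<Rightarrow> (nat \<Rightarrow> complex) \<Rightarrow> gen \<Rightarrow> complex \<Rightarrow> bool" where
  "whit_eigen lam mu c \<kappa> \<longleftrightarrow>
     (\<exists>i. c = A (int i) \<and> \<kappa> = lam i) \<or> (\<exists>j\<ge>1. c = Astar (int j) \<and> \<kappa> = mu j)"

lemma whit_eigen_word_in_whitK:
  assumes "whit_eigen lam mu c \<kappa>"
  shows "fa_diff (word (x @ [c])) (fa_scale \<kappa> (word x)) \<in> whitK lam mu"
proof -
  obtain g where g: "g \<in> whit_gens lam mu" "g = fa_diff (word [c]) (fa_scale \<kappa> (word []))"
    using assms unfolding whit_eigen_def whit_gens_def by auto
  have "fa_mult (word x) g \<in> whitK lam mu" using g by (intro whitK.whit finsupp_word)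
  thus ?thesis using g by (simp add: fa_mult_simps)
qed

lemma word_move_eigen_right:
  assumes "fa_subspace T" "whitK lam mu \<subseteq> T" "whit_eigen lam mu c \<kappa>"
    and "\<And>t1 d t2. t = t1 @ d # t2 \<Longrightarrow> weyl_bracket c d \<noteq> 0 \<Longrightarrow> word (x @ t1 @ t2) \<in> T"
  shows "fa_diff (word (x @ c # t)) (fa_scale \<kappa> (word (x @ t))) \<in> T"
  using assms(4)
proof (induction t arbitrary: x)
  case Nil
  then show ?case using whit_eigen_word_in_whitK[OF assms(3)] assms(2) by auto
next
  case (Cons d t)
  have swap: "fa_diff (word (x @ c # d # t)) (word (x @ d # c # t)) \<in> T"
    using Cons.prems[of "[]" d t] by (intro word_swap_in_subspace[OF assms(1,2)]) simp
  have "fa_diff (word ((x @ [d]) @ c # t)) (fa_scale \<kappa> (word ((x @ [d]) @ t))) \<in> T"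
    using Cons.prems[of "d # _"] by (intro Cons.IH) simp
  hence moved: "fa_diff (word (x @ d # c # t)) (fa_scale \<kappa> (word (x @ d # t))) \<in> T"
    by simp
  show ?case
    by (rule fa_subspace_lincomb[OF assms(1) swap moved, where \<alpha>=1 and \<beta>=1])
       (simp add: fa_diff_def fa_scale_def)
qed

lemma word_in_whitK_of_eigen_zero:
  assumes "whit_eigen lam mu c 0" "\<forall>d\<in>set t. weyl_bracket c d = 0"
  shows "word (x @ c # t) \<in> whitK lam mu"
proof -
  have "fa_diff (word (x @ c # t)) (fa_scale 0 (word (x @ t))) \<in> whitK lam mu"
    using assms by (intro word_move_eigen_right[OF fa_subspace_whitK order_refl]) auto
  thus ?thesis by (simp add: fa_diff_def fa_scale_def)
qed

fun gen_index :: "gen \<Rightarrow> int" where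
  "gen_index (A s) = s" | "gen_index (Astar s) = s"

lemma nord_word_in_whitK_far:
  assumes "\<forall>i>n. lam i = 0" "\<forall>j>m. mu j = 0"
    and far: "\<bar>r\<bar> + int n + int m < \<bar>j\<bar>" and t: "\<forall>d\<in>set t. \<bar>gen_index d\<bar> + \<bar>r\<bar> < \<bar>j\<bar>"
  shows "word (nord (r - j) j @ t) \<in> whitK lam mu"
proof (cases "j > 0")
  case True
  have "whit_eigen lam mu (Astar j) 0"
    unfolding whit_eigen_def using True far assms(2) by (intro disjI2 exI[of _ "nat j"]) auto
  moreover have "weyl_bracket (Astar j) d = 0" if "d \<in> set t" for d
    using t that by (cases d) (auto simp: weyl_bracket_def)
  ultimately have "word ([A (r - j)] @ Astar j # t) \<in> whitK lam mu"
    by (intro word_in_whitK_of_eigen_zero) auto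
  thus ?thesis using True by (simp add: nord_def)
next
  case False
  hence j: "j < 0" "r - j > 0" using far by auto
  have "whit_eigen lam mu (A (r - j)) 0"
    unfolding whit_eigen_def using j far assms(1) by (intro disjI1 exI[of _ "nat (r - j)"]) auto
  moreover have "weyl_bracket (A (r - j)) d = 0" if "d \<in> set t" for d
    using t that by (cases d) (auto simp: weyl_bracket_def)
  ultimately have "word ([Astar j] @ A (r - j) # t) \<in> whitK lam mu"
    by (intro word_in_whitK_of_eigen_zero) auto
  thus ?thesis using j by (simp add: nord_def)
qed

lemma finite_nord_words_notin_whitK:
  assumes "\<forall>i>n. lam i = 0" "\<forall>j>m. mu j = 0"
  shows "finite {j. word (nord (r - j) j @ t) \<notin> whitK lam mu}"
proof (rule finite_subset)
  define B where "B = \<bar>r\<bar> + int n + int m + (\<Sum>d\<in>set t. \<bar>gen_index d\<bar>)"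
  have member_le: "\<bar>gen_index d\<bar> \<le> (\<Sum>d\<in>set t. \<bar>gen_index d\<bar>)" if "d \<in> set t" for d
    using that by (intro member_le_sum) auto
  have nonneg: "0 \<le> (\<Sum>d\<in>set t. \<bar>gen_index d\<bar>)" by (intro sum_nonneg) auto
  have "word (nord (r - j) j @ t) \<in> whitK lam mu" if "B < \<bar>j\<bar>" for j
  proof (rule nord_word_in_whitK_far[OF assms])
    show "\<bar>r\<bar> + int n + int m < \<bar>j\<bar>" using that nonneg unfolding B_def by linarith
    show "\<forall>d\<in>set t. \<bar>gen_index d\<bar> + \<bar>r\<bar> < \<bar>j\<bar>"
      using that member_le unfolding B_def by fastforce
  qed
  thus "{j. word (nord (r - j) j @ t) \<notin> whitK lam mu} \<subseteq> {-B..B}"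
    by (force simp: abs_le_iff)
qed simp

lemma Top_isolates_summand:
  assumes fin: "finite {j. fa_mult (word (nord (r - j) j)) v \<notin> whitK lam mu}" (is "finite ?J")
    and q: "fa_mult (word (nord (r - q) q)) v \<notin> whitK lam mu"
  obtains f where "poly f (- of_int q) \<noteq> 0" "Top lam mu r f v = Tterm r f v q"
proof
  define f :: "complex poly" where "f = (\<Prod>k\<in>?J - {q}. [:of_int k, 1:])"
  have f_zero_iff: "poly f (- of_int j) = 0 \<longleftrightarrow> j \<in> ?J - {q}" for j
    using fin by (auto simp: f_def poly_prod prod_zero_iff)
  show "poly f (- of_int q) \<noteq> 0" by (simp add: f_zero_iff)
  have "Tterm r f v j \<notin> whitK lam mu \<longleftrightarrow> j = q" for j
  proof (cases "poly f (- of_int j) = 0")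
    case True
    hence "Tterm r f v j = fa_zero" by (simp add: Tterm_def fa_scale_def fa_zero_def)
    thus ?thesis using True whitK.zero f_zero_iff by auto
  next
    case False
    thus ?thesis using q f_zero_iff by (auto simp: Tterm_def whitK_scale_iff)
  qed
  hence "{j. Tterm r f v j \<notin> whitK lam mu} = {q}" by blast
  thus "Top lam mu r f v = Tterm r f v q" by (simp add: Top_def)
qed

lemma nord_word_in_subspace:
  assumes "\<forall>i>n. lam i = 0" "\<forall>j>m. mu j = 0"
    and S: "fa_subspace S" "whitK lam mu \<subseteq> S"
    and Top_closed: "\<forall>r f v. v \<in> S \<longrightarrow> finsupp v \<longrightarrow> Top lam mu r f v \<in> S"
    and "word t \<in> S"
  shows "word (nord p q @ t) \<in> S"
proof (cases "word (nord p q @ t) \<in> whitK lam mu")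
  case True
  thus ?thesis using S(2) by blast
next
  case False
  obtain f where f: "poly f (- of_int q) \<noteq> 0"
    and Top_eq: "Top lam mu (p + q) f (word t) = Tterm (p + q) f (word t) q"
    using Top_isolates_summand[of "p + q" "word t" lam mu q]
      finite_nord_words_notin_whitK[OF assms(1,2)] False
    by (auto simp: fa_mult_word)
  have "Tterm (p + q) f (word t) q \<in> S"
    using Top_closed assms(6) finsupp_word Top_eq by metis
  hence scaled: "fa_scale (poly f (- of_int q)) (word (nord p q @ t)) \<in> S"
    by (simp add: Tterm_def fa_mult_word)
  show ?thesis
    by (rule fa_subspace_lincomb[OF S(1) scaled scaled,
          where \<alpha>="1 / poly f (- of_int q)" and \<beta>=0])
       (simp add: f fa_scale_def)
qed

lemma word_eigen_in_subspace_iff: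
  assumes T: "fa_subspace T" "whitK lam mu \<subseteq> T" and eigen: "whit_eigen lam mu c \<kappa>"
    and shorter: "\<And>v. length v < length (x @ t) \<Longrightarrow> word v \<in> T"
  shows "word (x @ c # t) \<in> T \<longleftrightarrow> \<kappa> = 0 \<or> word (x @ t) \<in> T"
proof -
  have D: "fa_diff (word (x @ c # t)) (fa_scale \<kappa> (word (x @ t))) \<in> T"
    by (rule word_move_eigen_right[OF T eigen]) (auto intro: shorter)
  show ?thesis
  proof (intro iffI)
    assume c: "word (x @ c # t) \<in> T"
    show "\<kappa> = 0 \<or> word (x @ t) \<in> T"
    proof (cases "\<kappa> = 0")
      case False
      have "word (x @ t) \<in> T"
        by (rule fa_subspace_lincomb[OF T(1) c D, where \<alpha>="1 / \<kappa>" and \<beta>="- 1 / \<kappa>"])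
           (use False in \<open>simp add: fa_diff_def fa_scale_def field_simps\<close>)
      thus ?thesis ..
    qed simp
  next
    assume "\<kappa> = 0 \<or> word (x @ t) \<in> T"
    then show "word (x @ c # t) \<in> T"
    proof
      assume "\<kappa> = 0"
      thus ?thesis using D by (simp add: fa_diff_def fa_scale_def)
    next
      assume "word (x @ t) \<in> T"
      from fa_subspace_lincomb[OF T(1) D this, where \<alpha>=1 and \<beta>=\<kappa>]
      show ?thesis by (simp add: fa_diff_def fa_scale_def)
    qed
  qed
qed

lemma word_in_subspace:
  assumes vanish: "\<forall>i>n. lam i = 0" "\<forall>j>m. mu j = 0"
    and "\<exists>i\<le>n. lam i \<noteq> 0" "\<exists>j\<in>{1..m}. mu j \<noteq> 0"
    and S: "fa_subspace S" "whitK lam mu \<subseteq> S"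
    and Top_closed: "\<forall>r f v. v \<in> S \<longrightarrow> finsupp v \<longrightarrow> Top lam mu r f v \<in> S"
    and "word [] \<in> S"
  shows "word u \<in> S"
proof (induction "length u" arbitrary: u rule: less_induct)
  case less
  obtain i0 where i0: "lam i0 \<noteq> 0" using assms(3) by auto
  obtain j0 where j0: "j0 \<ge> 1" "mu j0 \<noteq> 0" using assms(4) by auto
  show ?case
  proof (cases u)
    case Nil
    thus ?thesis using assms(8) by simp
  next
    case (Cons g t)
    have shorter: "word v \<in> S" if "length v \<le> length t" for v
      using less that Cons by simp
    have nord: "word (nord p q @ t) \<in> S" for p q
      by (rule nord_word_in_subspace[OF vanish S Top_closed shorter]) simp
    show ?thesis
    proof (cases g)
      case (A p)
      have "whit_eigen lam mu (Astar (int j0)) (mu j0)"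
        unfolding whit_eigen_def using j0 by auto
      hence "word ([A p] @ Astar (int j0) # t) \<in> S \<longleftrightarrow> mu j0 = 0 \<or> word ([A p] @ t) \<in> S"
        by (rule word_eigen_in_subspace_iff[OF S]) (simp add: shorter)
      thus ?thesis using nord[of p "int j0"] j0 Cons A by (simp add: nord_def)
    next
      case (Astar q)
      show ?thesis
      proof (cases "q \<ge> 1")
        case True
        have "whit_eigen lam mu (Astar q) (mu (nat q))"
          unfolding whit_eigen_def using True by (intro disjI2 exI[of _ "nat q"]) auto
        hence "word ([] @ Astar q # t) \<in> S \<longleftrightarrow> mu (nat q) = 0 \<or> word ([] @ t) \<in> S"
          by (rule word_eigen_in_subspace_iff[OF S]) (simp add: shorter)
        thus ?thesis using shorter[of t] Cons Astar by simp
      next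
        case False
        have "whit_eigen lam mu (A (int i0)) (lam i0)"
          unfolding whit_eigen_def by auto
        hence "word ([Astar q] @ A (int i0) # t) \<in> S \<longleftrightarrow> lam i0 = 0 \<or> word ([Astar q] @ t) \<in> S"
          by (rule word_eigen_in_subspace_iff[OF S]) (simp add: shorter)
        thus ?thesis using nord[of "int i0" q] i0 False Cons Astar by (simp add: nord_def)
      qed
    qed
  qed
qed

theorem theorem5p2:
  fixes n m :: nat and lam mu :: "nat \<Rightarrow> complex"
  assumes "m \<ge> 1"
    and "\<forall>i>n. lam i = 0"
    and "\<forall>j>m. mu j = 0"
    and "\<exists>i\<le>n. lam i \<noteq> 0"
    and "\<exists>j\<in>{1..m}. mu j \<noteq> 0"
    and "whitK lam mu \<subseteq> S"
    and "\<forall>p\<in>S. \<forall>q\<in>S. fa_add p q \<in> S"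
    and "\<forall>c. \<forall>p\<in>S. fa_scale c p \<in> S"
    and "word [] \<in> S"
    and "\<forall>r f v. v \<in> S \<longrightarrow> finsupp v \<longrightarrow> Top lam mu r f v \<in> S"
  shows "\<forall>v. finsupp v \<longrightarrow> v \<in> S"
proof (intro allI impI)
  fix v assume "finsupp v"
  have S: "fa_subspace S" using assms(7,8) unfolding fa_subspace_def by blast
  have words: "word u \<in> S" for u
    by (rule word_in_subspace[OF assms(2-5) S assms(6,10,9)])
  show "v \<in> S" by (rule finsupp_in_subspace_of_words[OF S words \<open>finsupp v\<close>])
qed

end
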